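(* Let $\rho^s$ be a qubit state on $H_2=\mathbb{C}^2$ and let $\rho=\rho^s\otimes|0\rangle\langle 0|$ be the two-qubit state on $H_2\otimes H_2$ obtained by adjoining an auxiliary qubit in state $|0\rangle$. Then there exists an incoherent operation $\Lambda$ on $H_2\otimes H_2$ such that $\Lambda(\rho)$ is Bell-nonlocal if and only if $\rho^s$ has non-vanishing coherence, i.e. $\rho^s_{01}=\langle 0|\rho^s|1\rangle\neq 0$.
   Context: Coherence is taken with respect to the fixed computational basis $\{|0\rangle,|1\rangle\}$ (and the product computational basis $\{|i\rangle|j\rangle\}$ on $H_2\otimes H_2$). A state is incoherent if it is diagonal in this basis; $\rho^s$ has non-vanishing coherence if it is not incoherent (equivalently its $l_1$-norm coherence $\mathcal{C}_{l_1}(\rho^s)=\sum_{i\neq j}|\rho^s_{ij}|$ is nonzero). An incoherent operation is a completely positive trace-preserving map $\Lambda(\rho)=\sum_j K_j\rho K_j^\dagger$ whose Kraus operators satisfy $K_j\mathcal{I}K_j^\dagger\subseteq\mathcal{I}$, where $\mathcal{I}$ is the set of incoherent states. A bipartite state is Bell-nonlocal if it violates some Bell inequality, i.e. its measurement statistics do not admit a local hidden variable model. *)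

theory Defs
  imports Complex_Main
begin

text \<open>Finite-dimensional complex matrices are represented as functions
  nat => nat => complex; only the entries with indices below the dimension d
  are ever used.  The computational basis of C^d is the standard basis, and
  on C^2 (x) C^2 the product basis vector |i>|j> has index 2*i+j.\<close>

type_synonym cmat = "nat \<Rightarrow> nat \<Rightarrow> complex"

definition mmult :: "nat \<Rightarrow> cmat \<Rightarrow> cmat \<Rightarrow> cmat" where
  "mmult d A B = (\<lambda>i j. \<Sum>k<d. A i k * B k j)"

definition adjoint :: "cmat \<Rightarrow> cmat" where
  "adjoint A = (\<lambda>i j. cnj (A j i))"

definition idm :: cmat where
  "idm = (\<lambda>i j. if i = j then 1 else 0)"

definition mtrace :: "nat \<Rightarrow> cmat \<Rightarrow> complex" where
  "mtrace d A = (\<Sum>i<d. A i i)"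

definition psd :: "nat \<Rightarrow> cmat \<Rightarrow> bool" where
  "psd d A \<longleftrightarrow> (\<forall>v :: nat \<Rightarrow> complex.
      let q = (\<Sum>i<d. \<Sum>j<d. cnj (v i) * A i j * v j) in Im q = 0 \<and> Re q \<ge> 0)"

definition density :: "nat \<Rightarrow> cmat \<Rightarrow> bool" where
  "density d \<rho> \<longleftrightarrow> psd d \<rho> \<and> mtrace d \<rho> = 1"

definition diagonal :: "nat \<Rightarrow> cmat \<Rightarrow> bool" where
  "diagonal d A \<longleftrightarrow> (\<forall>i<d. \<forall>j<d. i \<noteq> j \<longrightarrow> A i j = 0)"

definition incoherent :: "nat \<Rightarrow> cmat \<Rightarrow> bool" where
  "incoherent d \<rho> \<longleftrightarrow> density d \<rho> \<and> diagonal d \<rho>"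

definition kron :: "nat \<Rightarrow> cmat \<Rightarrow> cmat \<Rightarrow> cmat" where
  "kron dB A B = (\<lambda>r c. A (r div dB) (c div dB) * B (r mod dB) (c mod dB))"

definition proj0 :: cmat where
  "proj0 = (\<lambda>i j. if i = 0 \<and> j = 0 then 1 else 0)"

definition kraus_apply :: "nat \<Rightarrow> cmat list \<Rightarrow> cmat \<Rightarrow> cmat" where
  "kraus_apply d Ks \<rho> = (\<lambda>i j. \<Sum>K\<leftarrow>Ks. mmult d (mmult d K \<rho>) (adjoint K) i j)"

definition trace_preserving :: "nat \<Rightarrow> cmat list \<Rightarrow> bool" where
  "trace_preserving d Ks \<longleftrightarrow>
     (\<forall>i<d. \<forall>j<d. (\<Sum>K\<leftarrow>Ks. mmult d (adjoint K) K i j) = idm i j)"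

text \<open>Incoherent operation: CPTP map in Kraus form (complete positivity is
  automatic) with every Kraus operator mapping incoherent states to
  (unnormalised) incoherent, i.e. diagonal, operators.\<close>
definition incoherent_op :: "nat \<Rightarrow> cmat list \<Rightarrow> bool" where
  "incoherent_op d Ks \<longleftrightarrow> trace_preserving d Ks \<and>
     (\<forall>K \<in> set Ks. \<forall>\<rho>. incoherent d \<rho> \<longrightarrow> diagonal d (mmult d (mmult d K \<rho>) (adjoint K)))"

definition povms :: "nat \<Rightarrow> nat \<Rightarrow> nat \<Rightarrow> (nat \<Rightarrow> nat \<Rightarrow> cmat) \<Rightarrow> bool" where
  "povms d m nout M \<longleftrightarrow> (\<forall>x<m. (\<forall>a<nout. psd d (M x a)) \<and>
      (\<forall>i<d. \<forall>j<d. (\<Sum>a<nout. M x a i j) = idm i j))"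

definition bell_prob :: "cmat \<Rightarrow> (nat \<Rightarrow> nat \<Rightarrow> cmat) \<Rightarrow> (nat \<Rightarrow> nat \<Rightarrow> cmat)
     \<Rightarrow> nat \<Rightarrow> nat \<Rightarrow> nat \<Rightarrow> nat \<Rightarrow> complex" where
  "bell_prob \<rho> M N a b x y = mtrace 4 (mmult 4 \<rho> (kron 2 (M x a) (N y b)))"

definition lhv_model :: "nat \<Rightarrow> nat \<Rightarrow> nat \<Rightarrow> nat
     \<Rightarrow> (nat \<Rightarrow> nat \<Rightarrow> nat \<Rightarrow> nat \<Rightarrow> complex) \<Rightarrow> bool" where
  "lhv_model mA mB oA oB P \<longleftrightarrow>
     (\<exists>(n::nat) (q :: nat \<Rightarrow> real) (pA :: nat \<Rightarrow> nat \<Rightarrow> nat \<Rightarrow> real) (pB :: nat \<Rightarrow> nat \<Rightarrow> nat \<Rightarrow> real).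
        (\<forall>l<n. q l \<ge> 0) \<and> (\<Sum>l<n. q l) = 1 \<and>
        (\<forall>l<n. \<forall>x<mA. (\<forall>a<oA. pA l x a \<ge> 0) \<and> (\<Sum>a<oA. pA l x a) = 1) \<and>
        (\<forall>l<n. \<forall>y<mB. (\<forall>b<oB. pB l y b \<ge> 0) \<and> (\<Sum>b<oB. pB l y b) = 1) \<and>
        (\<forall>a<oA. \<forall>b<oB. \<forall>x<mA. \<forall>y<mB.
           P a b x y = complex_of_real (\<Sum>l<n. q l * pA l x a * pB l y b)))"

definition bell_nonlocal :: "cmat \<Rightarrow> bool" where
  "bell_nonlocal \<rho> \<longleftrightarrow> (\<exists>mA mB oA oB M N.
      povms 2 mA oA M \<and> povms 2 mB oB N \<and>
      \<not> lhv_model mA mB oA oB (bell_prob \<rho> M N))"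

end

theory Submission
  imports Defs "HOL-Library.Complex_Order" "HOL-Combinatorics.Permutations"
begin

text \<open>If \<rho>s 0 1 = 0, then \<rho>s \<otimes> |0><0| is diagonal, every Kraus operator of an incoherent
  operation keeps it diagonal, and a diagonal two-qubit state is a mixture of the product basis
  states |i>|j>: taking the basis index as hidden variable and letting each party read off the
  diagonal entries of its effects gives a local hidden variable model.
  If \<rho>s 0 1 \<noteq> 0, the CNOT, being a permutation of the computational basis, is incoherent and
  maps \<rho>s \<otimes> |0><0| to sum_ab \<rho>s_ab |aa><bb|. The coherence \<rho>s 0 1 survives as the
  entry at |00><11|, and suitable spin measurements reach the CHSH value 2 + 6 |\<rho>s 0 1|^4 > 2,
  while every local hidden variable model obeys CHSH \<le> 2.\<close>

lemma less_4_iff: "(i::nat) < 4 \<longleftrightarrow> i = 0 \<or> i = 1 \<or> i = 2 \<or> i = 3"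
  by auto

lemma sum_lessThan_2: "(\<Sum>i<2. f i) = f 0 + f (1::nat)"
  by (simp add: numeral_2_eq_2)

lemma sum_lessThan_4: "(\<Sum>i<4. f i) = f 0 + f 1 + f 2 + f (3::nat)"
  by (simp add: lessThan_nat_numeral algebra_simps)

lemma sum_list_sum_swap:
  "(\<Sum>K\<leftarrow>Ks. \<Sum>i\<in>S. g K i) = (\<Sum>i\<in>S. \<Sum>K\<leftarrow>Ks. g K i :: 'a :: comm_monoid_add)"
  by (induction Ks) (simp_all add: sum.distrib)

lemma complex_nonneg_eq_of_real: "0 \<le> z \<Longrightarrow> z = complex_of_real (Re z)"
  by (simp add: less_eq_complex_def complex_eq_iff)

lemma cnj_of_bool [simp]: "cnj (of_bool b) = of_bool b"
  by simp

lemma cnj_mult_self_nonneg: "0 \<le> cnj z * z"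
  by (simp add: less_eq_complex_def)

section \<open>Positive semidefinite matrices\<close>

lemma psd_iff_nonneg_form:
  "psd d A \<longleftrightarrow> (\<forall>v. 0 \<le> (\<Sum>i<d. \<Sum>j<d. cnj (v i) * A i j * v j))"
  by (auto simp: psd_def Let_def less_eq_complex_def)

lemma psd_diag_nonneg:
  assumes "psd d A" "i < d"
  shows "0 \<le> A i i"
proof -
  define e where "e j = (if j = i then 1 else 0 :: complex)" for j
  have "0 \<le> (\<Sum>j<d. \<Sum>k<d. cnj (e j) * A j k * e k)"
    using assms(1) unfolding psd_iff_nonneg_form by blast
  also have "\<dots> = (\<Sum>j<d. \<Sum>k<d. if k = i then (if j = i then A i i else 0) else 0)"
    by (intro sum.cong refl) (simp add: e_def)
  also have "\<dots> = A i i"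
    using assms(2) by simp
  finally show ?thesis .
qed

lemma psd_if_diagonal:
  assumes "diagonal d A" "\<And>i. i < d \<Longrightarrow> 0 \<le> A i i"
  shows "psd d A"
  unfolding psd_iff_nonneg_form
proof
  fix v :: "nat \<Rightarrow> complex"
  have "(\<Sum>j<d. cnj (v i) * A i j * v j) = A i i * (cnj (v i) * v i)" if "i < d" for i
  proof -
    have "(\<Sum>j<d. cnj (v i) * A i j * v j) = (\<Sum>j\<in>{i}. cnj (v i) * A i j * v j)"
      using assms(1) that unfolding diagonal_def by (intro sum.mono_neutral_right) auto
    then show ?thesis by (simp add: mult_ac)
  qed
  then have "(\<Sum>i<d. \<Sum>j<d. cnj (v i) * A i j * v j) = (\<Sum>i<d. A i i * (cnj (v i) * v i))"
    by simp
  also have "\<dots> \<ge> 0"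
    using assms(2) by (intro sum_nonneg mult_nonneg_nonneg[OF _ cnj_mult_self_nonneg]) auto
  finally show "0 \<le> (\<Sum>i<d. \<Sum>j<d. cnj (v i) * A i j * v j)" .
qed

lemma psd2_iff_nonneg_form:
  "psd 2 A \<longleftrightarrow>
     (\<forall>x y. 0 \<le> cnj x * A 0 0 * x + cnj x * A 0 1 * y + cnj y * A 1 0 * x + cnj y * A 1 1 * y)"
  unfolding psd_iff_nonneg_form sum_lessThan_2
proof (intro iffI allI)
  fix x y
  assume "\<forall>v :: nat \<Rightarrow> complex. 0 \<le> cnj (v 0) * A 0 0 * v 0 + cnj (v 0) * A 0 1 * v 1 +
                  (cnj (v 1) * A 1 0 * v 0 + cnj (v 1) * A 1 1 * v 1)"
  then show "0 \<le> cnj x * A 0 0 * x + cnj x * A 0 1 * y + cnj y * A 1 0 * x + cnj y * A 1 1 * y"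
    by (elim allE[where x="\<lambda>i. if i = 0 then x else y"]) (simp add: add.assoc)
next
  fix v :: "nat \<Rightarrow> complex"
  assume "\<forall>x y. 0 \<le> cnj x * A 0 0 * x + cnj x * A 0 1 * y + cnj y * A 1 0 * x + cnj y * A 1 1 * y"
  then show "0 \<le> cnj (v 0) * A 0 0 * v 0 + cnj (v 0) * A 0 1 * v 1 +
                  (cnj (v 1) * A 1 0 * v 0 + cnj (v 1) * A 1 1 * v 1)"
    by (elim allE[where x="v 0"] allE[where x="v 1"]) (simp add: add.assoc)
qed

lemma psd2_hermitian:
  assumes "psd 2 A"
  shows "A 1 0 = cnj (A 0 1)"
proof -
  have real: "Im (cnj x * A 0 0 * x + cnj x * A 0 1 * y + cnj y * A 1 0 * x + cnj y * A 1 1 * y) = 0"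
    for x y
    using assms unfolding psd2_iff_nonneg_form less_eq_complex_def by simp
  from real[of 1 0] real[of 0 1] real[of 1 1] real[of 1 \<i>] show ?thesis
    by (auto simp: complex_eq_iff algebra_simps)
qed

lemma psd2_offdiag_bound:
  assumes "psd 2 A"
  shows "cmod (A 0 1) ^ 2 \<le> Re (A 0 0) * Re (A 1 1)"
proof -
  define p r z where "p = Re (A 0 0)" and "r = Re (A 1 1)" and "z = A 0 1"
  define w where "w = cmod z ^ 2"
  have w: "w = (Re z)\<^sup>2 + (Im z)\<^sup>2"
    by (simp add: w_def cmod_power2)
  have p: "A 0 0 = of_real p" "p \<ge> 0" and r: "A 1 1 = of_real r" "r \<ge> 0"
    using psd_diag_nonneg[OF assms, of 0] psd_diag_nonneg[OF assms, of 1]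
    by (auto simp: p_def r_def less_eq_complex_def complex_eq_iff)
  have form: "0 \<le> p * s\<^sup>2 - 2 * w * s * t + r * w * t\<^sup>2" for s t
  proof -
    let ?x = "complex_of_real s" and ?y = "- complex_of_real t * cnj z"
    have "cnj ?x * A 0 0 * ?x + cnj ?x * A 0 1 * ?y + cnj ?y * A 1 0 * ?x + cnj ?y * A 1 1 * ?y
        = of_real (p * s\<^sup>2 - 2 * w * s * t + r * w * t\<^sup>2)"
      unfolding p(1) r(1) psd2_hermitian[OF assms] z_def[symmetric] w
      by (simp add: complex_eq_iff algebra_simps power2_eq_square)
    then show ?thesis
      using assms unfolding psd2_iff_nonneg_form less_eq_complex_def
      by (metis Re_complex_of_real zero_complex.sel(1))
  qed
  have "w \<le> p * r"
  proof (cases "r = 0")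
    case True
    have "w\<^sup>2 * (p + 2) \<le> 0"
      using form[of w "p + 1"] True by (simp add: algebra_simps power2_eq_square)
    then have "w = 0" using p(2) by (simp add: mult_le_0_iff)
    then show ?thesis using p(2) r(2) by simp
  next
    case False
    have "0 \<le> r * (p * r - w)"
      using form[of r 1] by (simp add: algebra_simps power2_eq_square)
    then show ?thesis using False r(2) by (simp add: zero_le_mult_iff)
  qed
  then show ?thesis unfolding w_def z_def p_def r_def .
qed

lemma psd2I:
  assumes "0 \<le> A 0 0" "0 \<le> A 1 1" "A 1 0 = cnj (A 0 1)"
    and bound: "cmod (A 0 1) ^ 2 \<le> Re (A 0 0) * Re (A 1 1)"
  shows "psd 2 A"
  unfolding psd2_iff_nonneg_form
proof (intro allI)
  fix x y
  define a b t where "a = Re (A 0 0) * cmod x ^ 2" and "b = Re (A 1 1) * cmod y ^ 2"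
    and "t = cnj x * A 0 1 * y"
  have "cnj x * A 0 0 * x + cnj x * A 0 1 * y + cnj y * A 1 0 * x + cnj y * A 1 1 * y
      = of_real (a + b + 2 * Re t)"
    using complex_nonneg_eq_of_real[OF assms(1)] complex_nonneg_eq_of_real[OF assms(2)] assms(3)
    unfolding a_def b_def t_def cmod_power2
    by (simp add: complex_eq_iff algebra_simps power2_eq_square)
  moreover have "- Re t \<le> (a + b) / 2"
  proof -
    have ab: "a \<ge> 0" "b \<ge> 0"
      using assms(1,2) by (auto simp: a_def b_def less_eq_complex_def)
    have "cmod t ^ 2 = cmod (A 0 1) ^ 2 * (cmod x ^ 2 * cmod y ^ 2)"
      by (simp add: t_def norm_mult power_mult_distrib)
    also have "\<dots> \<le> a * b"
      using mult_right_mono[OF bound, of "cmod x ^ 2 * cmod y ^ 2"]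
      by (simp add: a_def b_def algebra_simps)
    also have "\<dots> \<le> ((a + b) / 2) ^ 2"
    proof -
      have "((a + b) / 2) ^ 2 - a * b = ((a - b) / 2) ^ 2"
        by (simp add: power2_eq_square field_simps)
      then show ?thesis using zero_le_power2[of "(a - b) / 2"] by linarith
    qed
    finally have "cmod t ^ 2 \<le> ((a + b) / 2) ^ 2" .
    then have "cmod t \<le> (a + b) / 2"
      using ab power2_le_imp_le by simp
    then show ?thesis using abs_Re_le_cmod[of t] by linarith
  qed
  ultimately show "0 \<le> cnj x * A 0 0 * x + cnj x * A 0 1 * y + cnj y * A 1 0 * x + cnj y * A 1 1 * y"
    by (simp add: less_eq_complex_def)
qed

section \<open>Kraus maps and incoherent operations\<close>

text \<open>The double conjugate makes the right-hand side literally the quadratic form of \<rho>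
  at the vector cnj (K i _).\<close>
lemma sandwich_diag_eq_form:
  "mmult d (mmult d K \<rho>) (adjoint K) i i = (\<Sum>l<d. \<Sum>k<d. cnj (cnj (K i l)) * \<rho> l k * cnj (K i k))"
proof -
  have "mmult d (mmult d K \<rho>) (adjoint K) i i = (\<Sum>k<d. \<Sum>l<d. K i l * \<rho> l k * cnj (K i k))"
    unfolding mmult_def adjoint_def by (simp add: sum_distrib_right)
  also have "\<dots> = (\<Sum>l<d. \<Sum>k<d. K i l * \<rho> l k * cnj (K i k))"
    by (rule sum.swap)
  finally show ?thesis by simp
qed

lemma sandwich_diag_nonneg:
  "psd d \<rho> \<Longrightarrow> 0 \<le> mmult d (mmult d K \<rho>) (adjoint K) i i"
  unfolding sandwich_diag_eq_form psd_iff_nonneg_form by (erule allE[where x="\<lambda>l. cnj (K i l)"])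

lemma mtrace_sandwich:
  "mtrace d (mmult d (mmult d K \<rho>) (adjoint K)) = (\<Sum>l<d. \<Sum>k<d. \<rho> l k * mmult d (adjoint K) K k l)"
proof -
  have "mtrace d (mmult d (mmult d K \<rho>) (adjoint K))
      = (\<Sum>i<d. \<Sum>l<d. \<Sum>k<d. K i l * \<rho> l k * cnj (K i k))"
    unfolding mtrace_def sandwich_diag_eq_form by simp
  also have "\<dots> = (\<Sum>l<d. \<Sum>i<d. \<Sum>k<d. K i l * \<rho> l k * cnj (K i k))"
    by (rule sum.swap)
  also have "\<dots> = (\<Sum>l<d. \<Sum>k<d. \<Sum>i<d. K i l * \<rho> l k * cnj (K i k))"
    by (intro sum.cong refl sum.swap)
  also have "\<dots> = (\<Sum>l<d. \<Sum>k<d. \<rho> l k * mmult d (adjoint K) K k l)"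
    unfolding mmult_def adjoint_def by (simp add: sum_distrib_left mult_ac)
  finally show ?thesis .
qed

lemma mtrace_kraus_apply:
  assumes "trace_preserving d Ks"
  shows "mtrace d (kraus_apply d Ks \<rho>) = mtrace d \<rho>"
proof -
  have "mtrace d (kraus_apply d Ks \<rho>) = (\<Sum>K\<leftarrow>Ks. mtrace d (mmult d (mmult d K \<rho>) (adjoint K)))"
    unfolding mtrace_def kraus_apply_def by (rule sum_list_sum_swap[symmetric])
  also have "\<dots> = (\<Sum>l<d. \<Sum>k<d. \<rho> l k * (\<Sum>K\<leftarrow>Ks. mmult d (adjoint K) K k l))"
    unfolding mtrace_sandwich by (simp add: sum_list_sum_swap sum_list_const_mult)
  also have "\<dots> = (\<Sum>l<d. \<Sum>k<d. \<rho> l k * idm k l)"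
    using assms unfolding trace_preserving_def by (intro sum.cong refl) auto
  also have "\<dots> = mtrace d \<rho>"
    unfolding mtrace_def idm_def by (simp add: if_distrib cong: if_cong)
  finally show ?thesis .
qed

lemma kraus_apply_incoherent:
  assumes "incoherent_op d Ks" "incoherent d \<rho>"
  shows "incoherent d (kraus_apply d Ks \<rho>)"
proof -
  have diag: "diagonal d (kraus_apply d Ks \<rho>)"
    unfolding diagonal_def kraus_apply_def
  proof (intro allI impI)
    fix i j assume "i < d" "j < d" "i \<noteq> j"
    then have "(\<Sum>K\<leftarrow>Ks. mmult d (mmult d K \<rho>) (adjoint K) i j) = (\<Sum>K\<leftarrow>Ks. 0)"
      using assms unfolding incoherent_op_def diagonal_def
      by (intro arg_cong[where f=sum_list] map_cong) auto
    then show "(\<Sum>K\<leftarrow>Ks. mmult d (mmult d K \<rho>) (adjoint K) i j) = 0"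
      by simp
  qed
  have "0 \<le> kraus_apply d Ks \<rho> i i" for i
    using assms(2) unfolding kraus_apply_def incoherent_def density_def
    by (auto intro!: sum_list_nonneg sandwich_diag_nonneg)
  with diag have "psd d (kraus_apply d Ks \<rho>)"
    by (rule psd_if_diagonal)
  moreover have "mtrace d (kraus_apply d Ks \<rho>) = 1"
    using assms mtrace_kraus_apply unfolding incoherent_op_def incoherent_def density_def by simp
  ultimately show ?thesis
    using diag unfolding incoherent_def density_def by simp
qed

section \<open>Diagonal states are local\<close>

lemma povm_diag_distribution:
  assumes "povms d m n M" "x < m" "i < d"
  shows "a < n \<Longrightarrow> 0 \<le> M x a i i" and "(\<Sum>a<n. Re (M x a i i)) = 1"
proof -
  show "0 \<le> M x a i i" if "a < n"
    using assms that unfolding povms_def by (blast intro: psd_diag_nonneg)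
  have "(\<Sum>a<n. M x a i i) = 1"
    using assms unfolding povms_def idm_def by simp
  then show "(\<Sum>a<n. Re (M x a i i)) = 1"
    by (metis Re_sum one_complex.sel(1))
qed

lemma bell_prob_diagonal:
  assumes "diagonal 4 \<sigma>"
  shows "bell_prob \<sigma> M N a b x y
       = (\<Sum>l<4. \<sigma> l l * M x a (l div 2) (l div 2) * N y b (l mod 2) (l mod 2))"
proof -
  let ?K = "kron 2 (M x a) (N y b)"
  have "(\<Sum>k<4. \<sigma> l k * ?K k l) = \<sigma> l l * ?K l l" if "l < 4" for l
  proof -
    have "(\<Sum>k<4. \<sigma> l k * ?K k l) = (\<Sum>k\<in>{l}. \<sigma> l k * ?K k l)"
      using assms that unfolding diagonal_def by (intro sum.mono_neutral_right) auto
    then show ?thesis by simp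
  qed
  then show ?thesis
    unfolding bell_prob_def mtrace_def mmult_def by (simp add: kron_def mult.assoc)
qed

lemma incoherent_not_bell_nonlocal:
  assumes "incoherent 4 \<sigma>"
  shows "\<not> bell_nonlocal \<sigma>"
  unfolding bell_nonlocal_def
proof (intro notI, elim exE conjE)
  fix mA mB oA oB M N
  assume M: "povms 2 mA oA M" and N: "povms 2 mB oB N"
    and not_local: "\<not> lhv_model mA mB oA oB (bell_prob \<sigma> M N)"
  have diag: "diagonal 4 \<sigma>" and \<sigma>_nonneg: "l < 4 \<Longrightarrow> 0 \<le> \<sigma> l l" and "mtrace 4 \<sigma> = 1" for l
    using assms psd_diag_nonneg unfolding incoherent_def density_def by auto
  define q where "q l = Re (\<sigma> l l)" for l
  define pA where "pA l x a = Re (M x a (l div 2) (l div 2))" for l x a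
  define pB where "pB l y b = Re (N y b (l mod 2) (l mod 2))" for l y b
  have "(\<Sum>l<4. q l) = 1"
    using \<open>mtrace 4 \<sigma> = 1\<close> unfolding q_def mtrace_def by (metis Re_sum one_complex.sel(1))
  moreover have "bell_prob \<sigma> M N a b x y = complex_of_real (\<Sum>l<4. q l * pA l x a * pB l y b)"
    if "a < oA" "b < oB" "x < mA" "y < mB" for a b x y
  proof -
    have "\<sigma> l l * M x a (l div 2) (l div 2) * N y b (l mod 2) (l mod 2)
        = complex_of_real (q l * pA l x a * pB l y b)" if "l < 4" for l
      using \<sigma>_nonneg[OF that] povm_diag_distribution(1)[OF M \<open>x < mA\<close> _ \<open>a < oA\<close>]
        povm_diag_distribution(1)[OF N \<open>y < mB\<close> _ \<open>b < oB\<close>] that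
      unfolding q_def pA_def pB_def by (simp add: complex_nonneg_eq_of_real[symmetric])
    then show ?thesis
      unfolding bell_prob_diagonal[OF diag] by simp
  qed
  ultimately have "lhv_model mA mB oA oB (bell_prob \<sigma> M N)"
    unfolding lhv_model_def
    using \<sigma>_nonneg povm_diag_distribution[OF M] povm_diag_distribution[OF N]
    by (intro exI[of _ 4] exI[of _ q] exI[of _ pA] exI[of _ pB])
       (auto simp: q_def pA_def pB_def less_eq_complex_def)
  with not_local show False ..
qed

lemma kron_proj0_incoherent:
  assumes "incoherent 2 \<rho>"
  shows "incoherent 4 (kron 2 \<rho> proj0)"
proof -
  have \<rho>: "\<rho> 0 1 = 0" "\<rho> 1 0 = 0" "0 \<le> \<rho> 0 0" "0 \<le> \<rho> 1 1" "\<rho> 0 0 + \<rho> 1 1 = 1"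
    using assms psd_diag_nonneg[of 2 \<rho>]
    unfolding incoherent_def density_def diagonal_def mtrace_def sum_lessThan_2 by auto
  have diag: "diagonal 4 (kron 2 \<rho> proj0)"
    using \<rho> unfolding diagonal_def kron_def proj0_def less_4_iff by auto
  moreover have "0 \<le> kron 2 \<rho> proj0 i i" if "i < 4" for i
    using \<rho> that unfolding kron_def proj0_def less_4_iff by auto
  ultimately have "psd 4 (kron 2 \<rho> proj0)"
    by (rule psd_if_diagonal)
  moreover have "mtrace 4 (kron 2 \<rho> proj0) = 1"
    using \<rho> unfolding mtrace_def sum_lessThan_4 kron_def proj0_def by simp
  ultimately show ?thesis
    using diag unfolding incoherent_def density_def by simp
qed

lemma density2_incoherent_iff:
  assumes "density 2 \<rho>"
  shows "incoherent 2 \<rho> \<longleftrightarrow> \<rho> 0 1 = 0"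
  using assms psd2_hermitian[of \<rho>]
  unfolding incoherent_def density_def diagonal_def by (auto simp: less_2_cases_iff)

section \<open>Permutation matrices and the CNOT\<close>

definition perm_matrix :: "(nat \<Rightarrow> nat) \<Rightarrow> cmat" where
  "perm_matrix p = (\<lambda>i j. of_bool (j = p i))"

lemma perm_matrix_sandwich:
  assumes "p permutes {..<d}" "i < d" "j < d"
  shows "mmult d (mmult d (perm_matrix p) \<rho>) (adjoint (perm_matrix p)) i j = \<rho> (p i) (p j)"
proof -
  have image: "{..<d} \<inter> {k. k = p l} = {p l}" if "l < d" for l
    using permutes_in_image[OF assms(1)] that by auto
  have "mmult d (perm_matrix p) \<rho> i k = \<rho> (p i) k" for k
    unfolding mmult_def perm_matrix_def using image[OF assms(2)] by simp
  moreover have "mmult d X (adjoint (perm_matrix p)) i j = X i (p j)" for X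
    unfolding mmult_def adjoint_def perm_matrix_def using image[OF assms(3)] by simp
  ultimately show ?thesis by simp
qed

lemma perm_matrix_trace_preserving:
  assumes "p permutes {..<d}"
  shows "trace_preserving d [perm_matrix p]"
  unfolding trace_preserving_def
proof (intro allI impI)
  fix i j assume "i < d" "j < d"
  have "mmult d (adjoint (perm_matrix p)) (perm_matrix p) i j
      = (\<Sum>k<d. of_bool (i = p k) * of_bool (j = p k))"
    by (simp only: mmult_def adjoint_def perm_matrix_def cnj_of_bool)
  also have "\<dots> = (\<Sum>k<d. of_bool (i = k) * of_bool (j = k))"
    using sum.permute[OF assms, of "\<lambda>m. of_bool (i = m) * of_bool (j = m)"]
    unfolding comp_def by (rule sym)
  also have "\<dots> = idm i j"
    using \<open>i < d\<close> by (auto simp: idm_def)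
  finally show "(\<Sum>K\<leftarrow>[perm_matrix p]. mmult d (adjoint K) K i j) = idm i j"
    by simp
qed

lemma perm_matrix_incoherent_op:
  assumes "p permutes {..<d}"
  shows "incoherent_op d [perm_matrix p]"
  unfolding incoherent_op_def
proof (intro conjI perm_matrix_trace_preserving[OF assms] ballI allI impI)
  fix K \<rho> assume "K \<in> set [perm_matrix p]" "incoherent d \<rho>"
  then show "diagonal d (mmult d (mmult d K \<rho>) (adjoint K))"
    using permutes_in_image[OF assms] permutes_inj[OF assms]
    unfolding incoherent_def diagonal_def
    by (auto simp: perm_matrix_sandwich[OF assms] inj_eq)
qed

text \<open>transpose 2 3 exchanges |1>|0> and |1>|1>: the CNOT controlled by the first qubit.\<close>
definition cnot :: cmat where
  "cnot = perm_matrix (transpose 2 3)"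

lemma cnot_incoherent_op: "incoherent_op 4 [cnot]"
  unfolding cnot_def by (intro perm_matrix_incoherent_op permutes_swap_id) auto

text \<open>The state sum_ab rho_ab |aa><bb|; the vector |aa> has index 3*a.\<close>
definition maximally_correlated :: "cmat \<Rightarrow> cmat" where
  "maximally_correlated \<rho> =
     (\<lambda>i j. if i \<in> {0, 3} \<and> j \<in> {0, 3} then \<rho> (i div 3) (j div 3) else 0)"

lemma cnot_kron_proj0:
  assumes "i < 4" "j < 4"
  shows "kraus_apply 4 [cnot] (kron 2 \<rho> proj0) i j = maximally_correlated \<rho> i j"
proof -
  have "transpose 2 3 permutes {..<4::nat}"
    by (intro permutes_swap_id) auto
  then have "kraus_apply 4 [cnot] (kron 2 \<rho> proj0) i j
      = kron 2 \<rho> proj0 (transpose 2 3 i) (transpose 2 3 j)"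
    unfolding kraus_apply_def cnot_def using assms by (simp add: perm_matrix_sandwich)
  then show ?thesis
    using assms unfolding less_4_iff
    by (auto simp: kron_def proj0_def maximally_correlated_def transpose_def)
qed

lemma bell_prob_maximally_correlated:
  "bell_prob (maximally_correlated \<rho>) M N a b x y
     = (\<Sum>i<2. \<Sum>j<2. \<rho> i j * M x a j i * N y b j i)"
  unfolding bell_prob_def mtrace_def mmult_def sum_lessThan_4 sum_lessThan_2
  by (simp add: maximally_correlated_def kron_def algebra_simps)

lemma bell_nonlocal_cong:
  assumes "\<And>i j. i < 4 \<Longrightarrow> j < 4 \<Longrightarrow> \<sigma> i j = \<sigma>' i j"
  shows "bell_nonlocal \<sigma> \<longleftrightarrow> bell_nonlocal \<sigma>'"
proof -
  have "bell_prob \<sigma> = bell_prob \<sigma>'"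
    unfolding bell_prob_def mtrace_def mmult_def using assms by (intro ext sum.cong refl) auto
  then show ?thesis
    unfolding bell_nonlocal_def by simp
qed

section \<open>Violation of the CHSH inequality\<close>

definition outcome_sign :: "nat \<Rightarrow> real" where
  "outcome_sign a = (if a = 0 then 1 else -1)"

text \<open>The effect (I + \<alpha> Z + Re \<beta> X + Im \<beta> Y) / 2, with X, Y, Z the Pauli matrices.\<close>
definition bloch_effect :: "real \<Rightarrow> complex \<Rightarrow> cmat" where
  "bloch_effect \<alpha> \<beta> = (\<lambda>i j.
     if i = 0 \<and> j = 0 then of_real ((1 + \<alpha>) / 2)
     else if i = 1 \<and> j = 1 then of_real ((1 - \<alpha>) / 2)
     else if i = 0 \<and> j = 1 then cnj \<beta> / 2
     else if i = 1 \<and> j = 0 then \<beta> / 2 else 0)"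

text \<open>Setting x measures the observable \<alpha> x Z + Re (\<beta> x) X + Im (\<beta> x) Y;
  outcome a stands for the eigenvalue outcome_sign a.\<close>
definition spin_measurements :: "(nat \<Rightarrow> real) \<Rightarrow> (nat \<Rightarrow> complex) \<Rightarrow> nat \<Rightarrow> nat \<Rightarrow> cmat" where
  "spin_measurements \<alpha> \<beta> = (\<lambda>x a. bloch_effect (outcome_sign a * \<alpha> x) (of_real (outcome_sign a) * \<beta> x))"

lemma bloch_effect_psd:
  assumes "\<alpha>\<^sup>2 + cmod \<beta> ^ 2 \<le> 1"
  shows "psd 2 (bloch_effect \<alpha> \<beta>)"
proof (rule psd2I)
  have "\<bar>\<alpha>\<bar> \<le> 1"
    using assms abs_square_le_1[of \<alpha>] zero_le_power2[of "cmod \<beta>"] by linarith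
  then show "0 \<le> bloch_effect \<alpha> \<beta> 0 0" "0 \<le> bloch_effect \<alpha> \<beta> 1 1"
    by (auto simp: bloch_effect_def less_eq_complex_def)
  have "cmod (bloch_effect \<alpha> \<beta> 0 1) ^ 2 = cmod \<beta> ^ 2 / 4"
    by (simp add: bloch_effect_def norm_divide power_divide)
  also have "\<dots> \<le> (1 + \<alpha>) / 2 * ((1 - \<alpha>) / 2)"
    using assms by (simp add: field_simps power2_eq_square)
  finally show "cmod (bloch_effect \<alpha> \<beta> 0 1) ^ 2
      \<le> Re (bloch_effect \<alpha> \<beta> 0 0) * Re (bloch_effect \<alpha> \<beta> 1 1)"
    by (simp add: bloch_effect_def)
qed (simp add: bloch_effect_def)

lemma spin_measurements_povms:
  assumes "\<And>x. x < m \<Longrightarrow> (\<alpha> x)\<^sup>2 + cmod (\<beta> x) ^ 2 \<le> 1"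
  shows "povms 2 m 2 (spin_measurements \<alpha> \<beta>)"
  unfolding povms_def
proof (intro allI impI conjI)
  fix x a assume "x < m"
  have "(outcome_sign a * \<alpha> x)\<^sup>2 + cmod (of_real (outcome_sign a) * \<beta> x) ^ 2
      = (\<alpha> x)\<^sup>2 + cmod (\<beta> x) ^ 2"
    by (simp add: outcome_sign_def norm_mult power_mult_distrib)
  then show "psd 2 (spin_measurements \<alpha> \<beta> x a)"
    unfolding spin_measurements_def using assms[OF \<open>x < m\<close>] by (intro bloch_effect_psd) simp
next
  fix x i j :: nat assume "i < 2" "j < 2"
  then show "(\<Sum>a<2. spin_measurements \<alpha> \<beta> x a i j) = idm i j"
    unfolding sum_lessThan_2 spin_measurements_def bloch_effect_def outcome_sign_def idm_def
    by (auto simp: field_simps)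
qed

definition correlator :: "(nat \<Rightarrow> nat \<Rightarrow> nat \<Rightarrow> nat \<Rightarrow> complex) \<Rightarrow> nat \<Rightarrow> nat \<Rightarrow> complex" where
  "correlator P x y = (\<Sum>a<2. \<Sum>b<2. of_real (outcome_sign a * outcome_sign b) * P a b x y)"

definition chsh :: "(nat \<Rightarrow> nat \<Rightarrow> nat \<Rightarrow> nat \<Rightarrow> complex) \<Rightarrow> complex" where
  "chsh P = correlator P 0 0 + correlator P 0 1 + correlator P 1 0 - correlator P 1 1"

lemma chsh_deterministic_bound:
  fixes x0 x1 y0 y1 :: real
  assumes "\<bar>x0\<bar> \<le> 1" "\<bar>x1\<bar> \<le> 1" "\<bar>y0\<bar> \<le> 1" "\<bar>y1\<bar> \<le> 1"
  shows "x0 * (y0 + y1) + x1 * (y0 - y1) \<le> 2"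
proof -
  have le_abs: "x * t \<le> \<bar>t\<bar>" if "\<bar>x\<bar> \<le> 1" for x t :: real
    using mult_right_mono[OF that, of "\<bar>t\<bar>"] abs_mult[of x t] abs_ge_self[of "x * t"] by simp
  have "\<bar>y0 + y1\<bar> + \<bar>y0 - y1\<bar> \<le> 2"
    using assms(3,4) by arith
  then show ?thesis
    using le_abs[OF assms(1), of "y0 + y1"] le_abs[OF assms(2), of "y0 - y1"] by linarith
qed

lemma chsh_lhv_bound:
  assumes "lhv_model 2 2 2 2 P"
  shows "Re (chsh P) \<le> 2"
proof -
  obtain n :: nat and q :: "nat \<Rightarrow> real" and pA pB :: "nat \<Rightarrow> nat \<Rightarrow> nat \<Rightarrow> real"
    where q: "\<forall>l<n. q l \<ge> 0" "(\<Sum>l<n. q l) = 1"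
    and pA: "\<forall>l<n. \<forall>x<2. (\<forall>a<2. pA l x a \<ge> 0) \<and> (\<Sum>a<2. pA l x a) = 1"
    and pB: "\<forall>l<n. \<forall>y<2. (\<forall>b<2. pB l y b \<ge> 0) \<and> (\<Sum>b<2. pB l y b) = 1"
    and P: "\<forall>a<2. \<forall>b<2. \<forall>x<2. \<forall>y<2. P a b x y = of_real (\<Sum>l<n. q l * pA l x a * pB l y b)"
    using assms unfolding lhv_model_def by (elim exE conjE) blast
  define X where "X l x = pA l x 0 - pA l x 1" for l x
  define Y where "Y l y = pB l y 0 - pB l y 1" for l y
  have X: "\<bar>X l x\<bar> \<le> 1" if "l < n" "x < 2" for l x
  proof -
    have "0 \<le> pA l x 0" "0 \<le> pA l x 1" "pA l x 0 + pA l x 1 = 1"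
      using pA that by (auto simp: sum_lessThan_2)
    then show ?thesis unfolding X_def by arith
  qed
  have Y: "\<bar>Y l y\<bar> \<le> 1" if "l < n" "y < 2" for l y
  proof -
    have "0 \<le> pB l y 0" "0 \<le> pB l y 1" "pB l y 0 + pB l y 1 = 1"
      using pB that by (auto simp: sum_lessThan_2)
    then show ?thesis unfolding Y_def by arith
  qed
  have correlator: "Re (correlator P x y) = (\<Sum>l<n. q l * (X l x * Y l y))"
    if "x < 2" "y < 2" for x y
  proof -
    have "Re (correlator P x y)
        = (\<Sum>l<n. q l * pA l x 0 * pB l y 0) - (\<Sum>l<n. q l * pA l x 0 * pB l y 1)
          - (\<Sum>l<n. q l * pA l x 1 * pB l y 0) + (\<Sum>l<n. q l * pA l x 1 * pB l y 1)"
      using P that unfolding correlator_def sum_lessThan_2 outcome_sign_def by simp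
    also have "\<dots> = (\<Sum>l<n. q l * (X l x * Y l y))"
      unfolding X_def Y_def sum_subtractf[symmetric] sum.distrib[symmetric]
      by (intro sum.cong refl) (simp add: algebra_simps)
    finally show ?thesis .
  qed
  have "Re (chsh P) = (\<Sum>l<n. q l * (X l 0 * (Y l 0 + Y l 1) + X l 1 * (Y l 0 - Y l 1)))"
    unfolding chsh_def using correlator
    by (simp add: sum_subtractf[symmetric] sum.distrib[symmetric] algebra_simps)
  also have "\<dots> \<le> (\<Sum>l<n. q l * 2)"
    using q X Y chsh_deterministic_bound by (intro sum_mono mult_left_mono) auto
  also have "\<dots> = 2"
    using q by (simp add: sum_distrib_right[symmetric])
  finally show ?thesis .
qed

lemma correlator_maximally_correlated:
  "correlator (bell_prob (maximally_correlated \<rho>) (spin_measurements \<alpha> \<beta>) (spin_measurements \<alpha>' \<beta>')) x y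
     = of_real (\<alpha> x * \<alpha>' y) * (\<rho> 0 0 + \<rho> 1 1)
       + \<rho> 0 1 * \<beta> x * \<beta>' y + \<rho> 1 0 * cnj (\<beta> x) * cnj (\<beta>' y)"
  unfolding correlator_def bell_prob_maximally_correlated sum_lessThan_2
  unfolding spin_measurements_def bloch_effect_def outcome_sign_def
  by (simp add: field_simps)

lemma density2_coherence_bound:
  assumes "density 2 \<rho>"
  shows "cmod (\<rho> 0 1) ^ 2 \<le> 1 / 4"
proof -
  have trace: "Re (\<rho> 0 0) + Re (\<rho> 1 1) = 1"
    using assms unfolding density_def mtrace_def sum_lessThan_2
    by (metis plus_complex.sel(1) one_complex.sel(1))
  have am_gm: "4 * (a * b) \<le> (a + b)\<^sup>2" for a b :: real
    using zero_le_power2[of "a - b"] by (simp add: power2_eq_square algebra_simps)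
  have "cmod (\<rho> 0 1) ^ 2 \<le> Re (\<rho> 0 0) * Re (\<rho> 1 1)"
    using assms psd2_offdiag_bound unfolding density_def by blast
  then show ?thesis
    using am_gm[of "Re (\<rho> 0 0)" "Re (\<rho> 1 1)"] unfolding trace by simp
qed

lemma maximally_correlated_bell_nonlocal:
  assumes "density 2 \<rho>" "\<rho> 0 1 \<noteq> 0"
  shows "bell_nonlocal (maximally_correlated \<rho>)"
proof -
  define c k where "c = \<rho> 0 1" and "k = cmod c ^ 2"
  have k: "0 < k" "k \<le> 1 / 4"
    using assms density2_coherence_bound unfolding c_def k_def by auto
  have trace: "\<rho> 0 0 + \<rho> 1 1 = 1" and "\<rho> 1 0 = cnj c"
    using assms psd2_hermitian unfolding density_def mtrace_def sum_lessThan_2 c_def by auto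
  have cc: "c * cnj c = of_real k" "cnj c * c = of_real k"
    unfolding k_def by (metis complex_norm_square of_real_power mult.commute)+
  txt \<open>Alice measures Z, and 2|c| \<le> 1 times the spin along cnj c; Bob measures Z tilted
    by \<plusminus>k. The correlators are 1 - k^2 for x = 0 and \<plusminus>4 k^2 for x = 1.\<close>
  define \<alpha>A :: "nat \<Rightarrow> real" and \<beta>A :: "nat \<Rightarrow> complex"
    and \<alpha>B :: "nat \<Rightarrow> real" and \<beta>B :: "nat \<Rightarrow> complex" where
    "\<alpha>A x = (if x = 0 then 1 else 0)" and "\<beta>A x = (if x = 0 then 0 else 2 * cnj c)"
    and "\<alpha>B y = 1 - k\<^sup>2" and "\<beta>B y = (if y = 0 then of_real k else - of_real k)" for x y :: nat
  define P where
    "P = bell_prob (maximally_correlated \<rho>) (spin_measurements \<alpha>A \<beta>A) (spin_measurements \<alpha>B \<beta>B)"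
  have "povms 2 2 2 (spin_measurements \<alpha>A \<beta>A)"
    using k by (intro spin_measurements_povms)
      (auto simp: \<alpha>A_def \<beta>A_def k_def[symmetric] norm_mult power_mult_distrib)
  moreover have "povms 2 2 2 (spin_measurements \<alpha>B \<beta>B)"
  proof (intro spin_measurements_povms)
    have "k\<^sup>2 * k\<^sup>2 \<le> k\<^sup>2"
      using k by (intro mult_left_le) (auto simp: power_le_one)
    then show "(\<alpha>B y)\<^sup>2 + cmod (\<beta>B y) ^ 2 \<le> 1" for y
      using k by (simp add: \<alpha>B_def \<beta>B_def power2_eq_square algebra_simps)
  qed
  moreover have "chsh P = of_real (2 + 6 * k\<^sup>2)"
    unfolding chsh_def P_def correlator_maximally_correlated trace \<open>\<rho> 1 0 = cnj c\<close> c_def[symmetric]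
    by (simp add: \<alpha>A_def \<beta>A_def \<alpha>B_def \<beta>B_def algebra_simps cc power2_eq_square)
  then have "\<not> lhv_model 2 2 2 2 P"
    using chsh_lhv_bound k(1) by fastforce
  ultimately show ?thesis
    unfolding bell_nonlocal_def P_def by blast
qed

theorem theorem1:
  fixes \<rho>s :: cmat
  assumes "density 2 \<rho>s"
  shows "(\<exists>Ks. incoherent_op 4 Ks \<and> bell_nonlocal (kraus_apply 4 Ks (kron 2 \<rho>s proj0)))
           \<longleftrightarrow> \<rho>s 0 1 \<noteq> 0"
proof
  assume "\<exists>Ks. incoherent_op 4 Ks \<and> bell_nonlocal (kraus_apply 4 Ks (kron 2 \<rho>s proj0))"
  then obtain Ks where Ks: "incoherent_op 4 Ks"
    and nonlocal: "bell_nonlocal (kraus_apply 4 Ks (kron 2 \<rho>s proj0))" by blast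
  show "\<rho>s 0 1 \<noteq> 0"
  proof
    assume "\<rho>s 0 1 = 0"
    then have "incoherent 2 \<rho>s"
      using density2_incoherent_iff[OF assms] by simp
    then have "incoherent 4 (kraus_apply 4 Ks (kron 2 \<rho>s proj0))"
      by (intro kraus_apply_incoherent[OF Ks] kron_proj0_incoherent)
    with nonlocal show False
      using incoherent_not_bell_nonlocal by blast
  qed
next
  assume "\<rho>s 0 1 \<noteq> 0"
  then have "bell_nonlocal (maximally_correlated \<rho>s)"
    by (rule maximally_correlated_bell_nonlocal[OF assms])
  moreover have "bell_nonlocal (kraus_apply 4 [cnot] (kron 2 \<rho>s proj0))
      \<longleftrightarrow> bell_nonlocal (maximally_correlated \<rho>s)"
    by (rule bell_nonlocal_cong) (rule cnot_kron_proj0)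
  ultimately show "\<exists>Ks. incoherent_op 4 Ks \<and> bell_nonlocal (kraus_apply 4 Ks (kron 2 \<rho>s proj0))"
    using cnot_incoherent_op by blast
qed

end
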